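(* Let $(X,d,\mu)$ be a space of homogeneous type, $\mathcal{D}$ a dyadic system, $1<p<\infty$, $w\in A_{p}$ and $\mathcal{S}\subset\mathcal{D}$ an $\eta$-sparse family of cubes, $\eta\in(0,1)$. Then $$\sum_{Q\in\mathcal{S}}w(Q)\leq c\,\frac{1}{\eta^p}[w]_{A_{p}}\,w\Big(\bigcup_{Q\in\mathcal{S}}Q\Big),$$ where $c$ depends only on $X$ and the parameters of $\mathcal{D}$.
   Context: Space of homogeneous type: quasi-metric $d$, doubling Borel measure $\mu$ with $0<\mu(B)<\infty$ for balls. A dyadic system $\mathcal{D}$ with parameters $0<c_0\le C_0$, $\delta\in(0,1)$: generations $\mathcal{D}_k$ partition $X$, are nested, and each $Q^k_j$ satisfies $B(z^k_j,c_0\delta^k)\subset Q^k_j\subset B(z^k_j,C_0\delta^k)$. $\eta$-sparse: there are pairwise disjoint $E_Q\subset Q$ with $\mu(E_Q)\ge\eta\mu(Q)$. $w(E)=\int_Ew\,d\mu$ and $[w]_{A_p}=\sup_B\frac{w(B)}{\mu(B)}\big(\frac{1}{\mu(B)}\int_Bw^{-1/(p-1)}d\mu\big)^{p-1}$, the supremum over balls. *)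

theory Defs
  imports "HOL-Analysis.Analysis"
begin

definition qball :: "('a \<Rightarrow> 'a \<Rightarrow> real) \<Rightarrow> 'a \<Rightarrow> real \<Rightarrow> 'a set" where
  "qball d x r = {y. d x y < r}"

text \<open>Quasi-metric on the whole type (the type is the underlying set X).\<close>
definition quasi_metric :: "('a \<Rightarrow> 'a \<Rightarrow> real) \<Rightarrow> bool" where
  "quasi_metric d \<longleftrightarrow>
     (\<exists>A0 \<ge> 1. \<forall>x y z. d x y \<ge> 0 \<and> (d x y = 0 \<longleftrightarrow> x = y) \<and> d x y = d y x
                        \<and> d x y \<le> A0 * (d x z + d z y))"

definition homogeneous_space :: "'a measure \<Rightarrow> ('a \<Rightarrow> 'a \<Rightarrow> real) \<Rightarrow> bool" where
  "homogeneous_space M d \<longleftrightarrow>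
     quasi_metric d \<and> space M = UNIV \<and>
     (\<forall>x r. r > 0 \<longrightarrow> qball d x r \<in> sets M \<and>
                      0 < emeasure M (qball d x r) \<and> emeasure M (qball d x r) < \<infinity>) \<and>
     (\<exists>C. \<forall>x r. r > 0 \<longrightarrow> emeasure M (qball d x (2 * r)) \<le> ennreal C * emeasure M (qball d x r))"

definition dyadic_system ::
  "'a measure \<Rightarrow> ('a \<Rightarrow> 'a \<Rightarrow> real) \<Rightarrow> real \<Rightarrow> real \<Rightarrow> real \<Rightarrow> (int \<Rightarrow> 'a set set) \<Rightarrow> bool" where
  "dyadic_system M d c0 C0 \<delta> D \<longleftrightarrow>
     0 < c0 \<and> c0 \<le> C0 \<and> 0 < \<delta> \<and> \<delta> < 1 \<and>
     (\<forall>k. \<Union>(D k) = UNIV) \<and>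
     (\<forall>k. \<forall>Q\<in>D k. \<forall>P\<in>D k. Q \<noteq> P \<longrightarrow> Q \<inter> P = {}) \<and>
     (\<forall>k l. k \<le> l \<longrightarrow> (\<forall>Q\<in>D l. \<forall>P\<in>D k. Q \<subseteq> P \<or> Q \<inter> P = {})) \<and>
     (\<forall>k. \<forall>Q\<in>D k. Q \<in> sets M \<and>
          (\<exists>z. qball d z (c0 * \<delta> powr real_of_int k) \<subseteq> Q \<and>
               Q \<subseteq> qball d z (C0 * \<delta> powr real_of_int k)))"

definition dyadic_cubes :: "(int \<Rightarrow> 'a set set) \<Rightarrow> 'a set set" where
  "dyadic_cubes D = (\<Union>k. D k)"

definition sparse :: "'a measure \<Rightarrow> real \<Rightarrow> 'a set set \<Rightarrow> bool" where
  "sparse M \<eta> S \<longleftrightarrow>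
     (\<exists>E. disjoint_family_on E S \<and>
          (\<forall>Q\<in>S. E Q \<subseteq> Q \<and> E Q \<in> sets M \<and> emeasure M (E Q) \<ge> ennreal \<eta> * emeasure M Q))"

definition wmeas :: "'a measure \<Rightarrow> ('a \<Rightarrow> real) \<Rightarrow> 'a set \<Rightarrow> ennreal" where
  "wmeas M w E = (\<integral>\<^sup>+ x\<in>E. ennreal (w x) \<partial>M)"

definition Ap_quantity ::
  "'a measure \<Rightarrow> ('a \<Rightarrow> 'a \<Rightarrow> real) \<Rightarrow> ('a \<Rightarrow> real) \<Rightarrow> real \<Rightarrow> 'a \<Rightarrow> real \<Rightarrow> real" where
  "Ap_quantity M d w p x r =
     (let B = qball d x r; muB = measure M B in
      (enn2real (wmeas M w B) / muB) *
      (enn2real (wmeas M (\<lambda>y. w y powr (-1 / (p - 1))) B) / muB) powr (p - 1))"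

definition in_Ap :: "'a measure \<Rightarrow> ('a \<Rightarrow> 'a \<Rightarrow> real) \<Rightarrow> real \<Rightarrow> ('a \<Rightarrow> real) \<Rightarrow> bool" where
  "in_Ap M d p w \<longleftrightarrow>
     w \<in> borel_measurable M \<and> (AE x in M. w x > 0) \<and> (\<forall>x. w x \<ge> 0) \<and>
     (\<forall>x r. r > 0 \<longrightarrow> wmeas M w (qball d x r) < \<infinity> \<and>
                      wmeas M (\<lambda>y. w y powr (-1 / (p - 1))) (qball d x r) < \<infinity>) \<and>
     bdd_above {Ap_quantity M d w p x r | x r. r > 0}"

definition Ap_const :: "'a measure \<Rightarrow> ('a \<Rightarrow> 'a \<Rightarrow> real) \<Rightarrow> real \<Rightarrow> ('a \<Rightarrow> real) \<Rightarrow> real" where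
  "Ap_const M d p w = Sup {Ap_quantity M d w p x r | x r. r > 0}"

end

theory Submission
  imports Defs
begin

(* For every cube Q of S the doubling property and the dyadic structure give a ball B containing Q
   with mu(B) <= C mu(Q). Hoelder's inequality for 1 = w^(1/p) w^(-1/p) on the sparse part E_Q gives
   mu(E_Q)^p <= w(E_Q) sigma(B)^(p-1) with sigma = w^(-1/(p-1)), and the A_p condition on B gives
   w(B) sigma(B)^(p-1) <= [w]_(A_p) mu(B)^p. Since mu(B) <= C mu(Q) <= (C/eta) mu(E_Q), this yields
   w(Q) <= (C/eta)^p [w]_(A_p) w(E_Q), and summing over the pairwise disjoint sets E_Q finishes the proof. *)

lemma wmeas_mono: "A \<subseteq> B \<Longrightarrow> wmeas M w A \<le> wmeas M w B"
  unfolding wmeas_def by (intro nn_integral_mono) (auto simp: indicator_def)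

lemma wmeas_eq_emeasure_density:
  assumes "w \<in> borel_measurable M" "A \<in> sets M"
  shows "wmeas M w A = emeasure (density M (\<lambda>x. ennreal (w x))) A"
  using assms by (simp add: wmeas_def emeasure_density)

lemma wmeas_gt_0:
  assumes "w \<in> borel_measurable M" "AE x in M. w x > 0"
    and "A \<in> sets M" "emeasure M A > 0"
  shows "wmeas M w A > 0"
proof (rule ccontr)
  assume "\<not> wmeas M w A > 0"
  then have "(\<integral>\<^sup>+ x. ennreal (w x) * indicator A x \<partial>M) = 0"
    unfolding wmeas_def by (simp add: not_gr_zero)
  then have "AE x in M. ennreal (w x) * indicator A x = 0"
    using assms(1,3) by (subst (asm) nn_integral_0_iff_AE) auto
  then have "AE x in M. x \<notin> A"
    using assms(2) by eventually_elim (auto simp: indicator_def)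
  then show False
    using assms(3,4) by (subst (asm) AE_iff_measurable[of A]) (auto dest: sets.sets_into_space)
qed

lemma Young_dual_weight:
  fixes a A B p :: real
  assumes p: "1 < p" and pos: "a > 0" "A > 0" "B > 0"
  shows "1 \<le> A powr (1/p) * B powr ((p-1)/p) *
              (a / (p * A) + (p-1) * a powr (-1/(p-1)) / (p * B))"
proof -
  define s where "s = a powr (-1/(p-1))"
  define K where "K = A powr (1/p) * B powr ((p-1)/p)"
  have "s > 0" "K > 0" using pos by (simp_all add: s_def K_def)
  have "s powr ((p-1)/p) = a powr (-1/p)"
    using p pos by (simp add: s_def powr_powr field_simps)
  then have "(a/A) powr (1/p) * (s/B) powr ((p-1)/p) * K = a powr (1/p) * a powr (-1/p)"
    using pos \<open>s > 0\<close> by (simp add: K_def powr_divide)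
  also have "\<dots> = 1"
    using pos by (simp add: powr_add[symmetric])
  finally have "1 = (a/A) powr (1/p) * (s/B) powr ((p-1)/p) * K" ..
  also have "\<dots> \<le> (1/p * (a/A) + (p-1)/p * (s/B)) * K"
    using p pos \<open>s > 0\<close> \<open>K > 0\<close>
    by (intro mult_right_mono Youngs_inequality_0) (auto simp: field_simps)
  finally show ?thesis
    by (simp add: s_def K_def mult.commute)
qed

(* Hoelder's inequality for 1 = w^(1/p) w^(-1/p) on E: integrate Young's inequality for the
   normalised functions w / w(E) and sigma / sigma(E). The case mu(E) = infinity is vacuous
   because measure then returns 0. *)
lemma measure_powr_le_wmeas_dual:
  fixes w :: "'a \<Rightarrow> real" and p :: real
  defines "\<sigma> \<equiv> \<lambda>y. w y powr (-1/(p-1))"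
  assumes p: "1 < p" and w: "w \<in> borel_measurable M" "AE x in M. w x > 0" "\<forall>x. w x \<ge> 0"
    and E: "E \<in> sets M" and fin: "wmeas M w E < \<infinity>" "wmeas M \<sigma> E < \<infinity>"
  shows "measure M E powr p \<le> enn2real (wmeas M w E) * enn2real (wmeas M \<sigma> E) powr (p-1)"
proof (cases "emeasure M E = 0 \<or> emeasure M E = \<infinity>")
  case True
  then show ?thesis by (auto simp: measure_def)
next
  case False
  define A where "A = enn2real (wmeas M w E)"
  define B where "B = enn2real (wmeas M \<sigma> E)"
  define K where "K = A powr (1/p) * B powr ((p-1)/p)"
  have "\<sigma> \<in> borel_measurable M"
    using w(1) unfolding \<sigma>_def by measurable
  moreover have "AE x in M. \<sigma> x > 0"
    using w(2) unfolding \<sigma>_def by eventually_elim simp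
  ultimately have \<sigma>: "\<sigma> \<in> borel_measurable M" "AE x in M. \<sigma> x > 0" .
  have "0 < emeasure M E" using False by (simp add: zero_less_iff_neq_zero)
  then have "0 < wmeas M w E" "0 < wmeas M \<sigma> E"
    using wmeas_gt_0[OF w(1,2) E] wmeas_gt_0[OF \<sigma> E] by auto
  then have AB: "A > 0" "B > 0" "wmeas M w E = ennreal A" "wmeas M \<sigma> E = ennreal B"
    using fin by (auto simp: A_def B_def enn2real_positive_iff ennreal_enn2real_if)
  then have "K > 0" by (simp add: K_def)
  define k1 k2 where "k1 = K / (p * A)" and "k2 = K * (p-1) / (p * B)"
  have k: "k1 \<ge> 0" "k2 \<ge> 0" using AB \<open>K > 0\<close> p by (simp_all add: k1_def k2_def)
  have "emeasure M E = (\<integral>\<^sup>+ x\<in>E. 1 \<partial>M)" using E by simp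
  also have "\<dots> \<le> (\<integral>\<^sup>+ x\<in>E. ennreal k1 * ennreal (w x) + ennreal k2 * ennreal (\<sigma> x) \<partial>M)"
  proof (intro nn_integral_mono_AE, use w(2) in eventually_elim)
    case (elim x)
    have "1 \<le> k1 * w x + k2 * \<sigma> x"
      using Young_dual_weight[OF p elim AB(1,2)] by (simp add: k1_def k2_def K_def \<sigma>_def field_simps)
    then show ?case
      using k w(3) by (auto simp: indicator_def ennreal_mult[symmetric] ennreal_plus[symmetric]
          \<sigma>_def simp del: ennreal_plus)
  qed
  also have "\<dots> = (\<integral>\<^sup>+ x\<in>E. ennreal k1 * ennreal (w x) \<partial>M) + (\<integral>\<^sup>+ x\<in>E. ennreal k2 * ennreal (\<sigma> x) \<partial>M)"
    using w(1) \<sigma>(1) E by (intro nn_set_integral_add) auto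
  also have "\<dots> = ennreal k1 * wmeas M w E + ennreal k2 * wmeas M \<sigma> E"
    unfolding wmeas_def using w(1) \<sigma>(1) E by (simp add: mult.assoc nn_integral_cmult)
  also have "\<dots> = ennreal K"
    using k AB p by (simp add: ennreal_mult[symmetric] ennreal_plus[symmetric] k1_def k2_def field_simps
        del: ennreal_plus)
  finally have "measure M E \<le> K"
    using \<open>K > 0\<close> by (simp add: measure_def enn2real_leI)
  then have "measure M E powr p \<le> K powr p"
    using p by (intro powr_mono2) auto
  also have "K powr p = A * B powr (p-1)"
    using AB p by (simp add: K_def powr_mult powr_powr)
  finally show ?thesis by (simp add: A_def B_def)
qed

lemma Ap_const_nonneg:
  assumes "in_Ap M d p w"
  shows "0 \<le> Ap_const M d p w"
proof -
  have "0 \<le> Ap_quantity M d w p x 1" for x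
    unfolding Ap_quantity_def Let_def by (intro mult_nonneg_nonneg divide_nonneg_nonneg) auto
  also have "Ap_quantity M d w p x 1 \<le> Ap_const M d p w" for x
    using assms unfolding in_Ap_def Ap_const_def by (intro cSup_upper) (auto intro!: exI[of _ x] exI[of _ 1])
  finally show ?thesis .
qed

lemma wmeas_ball_mult_dual_powr_le_Ap_const:
  fixes w :: "'a \<Rightarrow> real" and p :: real
  defines "\<sigma> \<equiv> \<lambda>y. w y powr (-1/(p-1))"
  assumes w: "in_Ap M d p w" and r: "r > 0" and B: "0 < measure M (qball d z r)"
  shows "enn2real (wmeas M w (qball d z r)) * enn2real (wmeas M \<sigma> (qball d z r)) powr (p-1)
           \<le> Ap_const M d p w * measure M (qball d z r) powr p"
proof -
  define mB where "mB = measure M (qball d z r)"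
  have "mB powr p = mB * mB powr (p-1)"
    using B powr_add[of mB 1 "p-1"] by (simp add: mB_def)
  then have "enn2real (wmeas M w (qball d z r)) * enn2real (wmeas M \<sigma> (qball d z r)) powr (p-1)
      = Ap_quantity M d w p z r * mB powr p"
    using B by (simp add: Ap_quantity_def Let_def mB_def \<sigma>_def powr_divide field_simps)
  also have "Ap_quantity M d w p z r \<le> Ap_const M d p w"
    using w r unfolding in_Ap_def Ap_const_def by (intro cSup_upper) auto
  finally show ?thesis
    using B by (simp add: mB_def mult_right_mono)
qed

lemma homogeneous_space_doubling_pow:
  assumes "homogeneous_space M d"
  obtains C :: real where "C \<ge> 1"
    "\<And>n x r. r > 0 \<Longrightarrow> emeasure M (qball d x (2^n * r)) \<le> ennreal (C^n) * emeasure M (qball d x r)"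
proof -
  obtain C0 where C0: "\<And>x r. r > 0 \<Longrightarrow> emeasure M (qball d x (2 * r)) \<le> ennreal C0 * emeasure M (qball d x r)"
    using assms unfolding homogeneous_space_def by blast
  define C where "C = max C0 1"
  have pow: "emeasure M (qball d x (2^n * r)) \<le> ennreal (C^n) * emeasure M (qball d x r)"
    if "r > 0" for n x r
  proof (induction n)
    case 0
    then show ?case by simp
  next
    case (Suc n)
    have "emeasure M (qball d x (2^Suc n * r)) \<le> ennreal C0 * emeasure M (qball d x (2^n * r))"
      using C0[of "2^n * r" x] that by (simp add: mult.assoc)
    also have "\<dots> \<le> ennreal C * (ennreal (C^n) * emeasure M (qball d x r))"
      using Suc by (intro mult_mono) (auto simp: C_def intro!: ennreal_leI)
    also have "\<dots> = ennreal (C^Suc n) * emeasure M (qball d x r)"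
      by (simp add: C_def ennreal_mult mult.assoc)
    finally show ?case .
  qed
  show ?thesis
    by (rule that[OF _ pow]) (simp_all add: C_def)
qed

lemma measure_ball_le_doubling_pow_measure:
  assumes hs: "homogeneous_space M d" and "Cd \<ge> 0"
    and Cd: "\<And>n x r. r > 0 \<Longrightarrow> emeasure M (qball d x (2^n * r)) \<le> ennreal (Cd^n) * emeasure M (qball d x r)"
    and ab: "0 < a" "0 < b" "b \<le> 2^m * a"
    and Q: "Q \<in> sets M" "qball d z a \<subseteq> Q" "Q \<subseteq> qball d z b"
  shows "measure M (qball d z b) \<le> Cd^m * measure M Q"
proof -
  have balls: "\<And>r. r > 0 \<Longrightarrow> qball d z r \<in> sets M \<and> emeasure M (qball d z r) < \<infinity>"
    using hs unfolding homogeneous_space_def by blast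
  have "emeasure M (qball d z b) \<le> emeasure M (qball d z (2^m * a))"
    using balls ab by (intro emeasure_mono) (auto simp: qball_def)
  also have "\<dots> \<le> ennreal (Cd^m) * emeasure M (qball d z a)"
    using Cd ab by blast
  also have "\<dots> \<le> ennreal (Cd^m) * emeasure M Q"
    using Q by (intro mult_left_mono emeasure_mono) auto
  finally have "emeasure M (qball d z b) \<le> ennreal (Cd^m) * emeasure M Q" .
  moreover have "emeasure M Q < \<infinity>"
    using emeasure_mono[OF Q(3)] balls ab by (meson le_less_trans)
  ultimately have "measure M (qball d z b) \<le> enn2real (ennreal (Cd^m) * emeasure M Q)"
    unfolding measure_def by (intro enn2real_mono) (auto simp: ennreal_mult_less_top)
  also have "\<dots> = Cd^m * measure M Q"
    using \<open>Cd \<ge> 0\<close> by (simp add: enn2real_mult measure_def)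
  finally show ?thesis .
qed

lemma dyadic_cube_ball_comparable:
  assumes hs: "homogeneous_space M d" and ds: "dyadic_system M d c0 C0 \<delta> D"
  obtains C :: real where "C > 0"
    "\<And>Q. Q \<in> dyadic_cubes D \<Longrightarrow>
       \<exists>z r. r > 0 \<and> Q \<subseteq> qball d z r \<and> measure M (qball d z r) \<le> C * measure M Q"
proof -
  obtain Cd :: real where "Cd \<ge> 1" and Cd:
    "\<And>n z r. r > 0 \<Longrightarrow> emeasure M (qball d z (2^n * r)) \<le> ennreal (Cd^n) * emeasure M (qball d z r)"
    using homogeneous_space_doubling_pow[OF hs] by blast
  have c0: "0 < c0" "c0 \<le> C0" and "0 < \<delta>"
    and cubes: "\<And>k Q. Q \<in> D k \<Longrightarrow> Q \<in> sets M \<and>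
       (\<exists>z. qball d z (c0 * \<delta> powr real_of_int k) \<subseteq> Q \<and> Q \<subseteq> qball d z (C0 * \<delta> powr real_of_int k))"
    using ds unfolding dyadic_system_def by auto
  obtain m :: nat where m: "C0 / c0 < 2^m"
    using real_arch_pow[of "2::real"] by auto
  have "\<exists>z r. r > 0 \<and> Q \<subseteq> qball d z r \<and> measure M (qball d z r) \<le> Cd^m * measure M Q"
    if Q: "Q \<in> dyadic_cubes D" for Q
  proof -
    obtain k where "Q \<in> D k" using Q unfolding dyadic_cubes_def by blast
    define s where "s = \<delta> powr real_of_int k"
    have "s > 0" using \<open>0 < \<delta>\<close> by (simp add: s_def)
    obtain z where z: "qball d z (c0 * s) \<subseteq> Q" "Q \<subseteq> qball d z (C0 * s)"
      using cubes \<open>Q \<in> D k\<close> unfolding s_def by blast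
    have "C0 * s \<le> 2^m * (c0 * s)"
      using m c0 \<open>s > 0\<close> by (simp add: field_simps)
    moreover have "c0 * s > 0" "C0 * s > 0" using c0 \<open>s > 0\<close> by simp_all
    moreover have "Q \<in> sets M" using cubes \<open>Q \<in> D k\<close> by blast
    ultimately have "measure M (qball d z (C0 * s)) \<le> Cd^m * measure M Q"
      using \<open>1 \<le> Cd\<close> z by (intro measure_ball_le_doubling_pow_measure[OF hs _ Cd]) auto
    then show ?thesis
      using z \<open>C0 * s > 0\<close> by blast
  qed
  moreover have "Cd^m > 0" using \<open>1 \<le> Cd\<close> by simp
  ultimately show ?thesis using that by blast
qed

lemma wmeas_ball_mult_measure_powr_le_Ap_const:
  fixes w :: "'a \<Rightarrow> real" and p :: real
  assumes w: "in_Ap M d p w" and p: "1 < p"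
    and r: "r > 0" and B: "0 < measure M (qball d z r)"
    and E: "E \<in> sets M" "E \<subseteq> qball d z r"
  shows "enn2real (wmeas M w (qball d z r)) * measure M E powr p
           \<le> Ap_const M d p w * measure M (qball d z r) powr p * enn2real (wmeas M w E)"
proof -
  define \<sigma> where "\<sigma> = (\<lambda>y. w y powr (-1/(p-1)))"
  define WB WE SB where "WB = enn2real (wmeas M w (qball d z r))" and "WE = enn2real (wmeas M w E)"
    and "SB = enn2real (wmeas M \<sigma> (qball d z r))"
  have wm: "w \<in> borel_measurable M" "AE x in M. w x > 0" "\<forall>x. w x \<ge> 0"
    and fin: "wmeas M w (qball d z r) < \<infinity>" "wmeas M \<sigma> (qball d z r) < \<infinity>"
    using w r unfolding in_Ap_def \<sigma>_def by auto
  have finE: "wmeas M w E < \<infinity>" "wmeas M \<sigma> E < \<infinity>"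
    using fin wmeas_mono[OF E(2), of M] by (auto intro: le_less_trans)
  have "measure M E powr p \<le> WE * enn2real (wmeas M \<sigma> E) powr (p-1)"
    using measure_powr_le_wmeas_dual[OF p wm E(1)] finE by (simp add: WE_def \<sigma>_def)
  also have "\<dots> \<le> WE * SB powr (p-1)"
    unfolding SB_def using fin p wmeas_mono[OF E(2), of M \<sigma>]
    by (intro mult_left_mono powr_mono2 enn2real_mono) (auto simp: WE_def)
  finally have "WB * measure M E powr p \<le> WB * (WE * SB powr (p-1))"
    by (intro mult_left_mono) (auto simp: WB_def)
  also have "\<dots> = WE * (WB * SB powr (p-1))"
    by (simp only: mult.left_commute)
  also have "\<dots> \<le> WE * (Ap_const M d p w * measure M (qball d z r) powr p)"
    using wmeas_ball_mult_dual_powr_le_Ap_const[OF w r B] by (intro mult_left_mono) (auto simp: WB_def WE_def SB_def \<sigma>_def)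
  finally show ?thesis
    by (simp add: WB_def WE_def mult_ac)
qed

lemma wmeas_le_Ap_const_wmeas_large_subset:
  fixes w :: "'a \<Rightarrow> real" and p :: real
  assumes hs: "homogeneous_space M d" and w: "in_Ap M d p w" and p: "1 < p"
    and r: "r > 0" and QB: "Q \<subseteq> qball d z r" and BQ: "measure M (qball d z r) \<le> C * measure M Q"
    and E: "E \<in> sets M" "E \<subseteq> Q" and \<eta>: "\<eta> > 0" "ennreal \<eta> * emeasure M Q \<le> emeasure M E"
  shows "wmeas M w Q \<le> ennreal (C powr p * (1 / \<eta> powr p) * Ap_const M d p w) * wmeas M w E"
proof -
  define B where "B = qball d z r"
  define A WQ WE WB where "A = Ap_const M d p w" and "WQ = enn2real (wmeas M w Q)"
    and "WE = enn2real (wmeas M w E)" and "WB = enn2real (wmeas M w B)"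
  have B: "B \<in> sets M" "0 < emeasure M B" "emeasure M B < \<infinity>"
    using hs r unfolding homogeneous_space_def B_def by auto
  then have "0 < measure M B" by (simp add: measure_def enn2real_positive_iff)
  then have "0 < C * measure M Q" using BQ by (simp add: B_def)
  then have "0 < C" "0 < measure M Q" by (simp_all add: zero_less_mult_iff)
  have "E \<subseteq> B" "Q \<subseteq> B" using E QB by (auto simp: B_def)
  have finB: "wmeas M w B < \<infinity>" using w r by (simp add: in_Ap_def B_def)
  then have fin: "wmeas M w Q < \<infinity>" "wmeas M w E < \<infinity>"
    using wmeas_mono[OF \<open>Q \<subseteq> B\<close>, of M w] wmeas_mono[OF \<open>E \<subseteq> B\<close>, of M w] by auto
  have "emeasure M E < \<infinity>" using B \<open>E \<subseteq> B\<close> by (meson emeasure_mono le_less_trans)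
  then have "enn2real (ennreal \<eta> * emeasure M Q) \<le> measure M E"
    using \<eta>(2) unfolding measure_def by (intro enn2real_mono) auto
  then have mE: "\<eta> * measure M Q \<le> measure M E"
    using \<eta>(1) by (simp add: enn2real_mult measure_def)
  have "WQ \<le> WB"
    using finB wmeas_mono[OF \<open>Q \<subseteq> B\<close>] by (auto simp: WQ_def WB_def intro: enn2real_mono)
  then have "WQ * \<eta> powr p * measure M Q powr p \<le> WB * (\<eta> * measure M Q) powr p"
    using \<eta> \<open>0 < measure M Q\<close> by (simp add: powr_mult mult_right_mono)
  also have "\<dots> \<le> WB * measure M E powr p"
    using mE \<eta> \<open>0 < measure M Q\<close> p by (intro mult_left_mono powr_mono2) (auto simp: WB_def)
  also have "\<dots> \<le> A * measure M B powr p * WE"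
    using wmeas_ball_mult_measure_powr_le_Ap_const[OF w p r _ E(1)] \<open>0 < measure M B\<close> \<open>E \<subseteq> B\<close>
    by (simp add: A_def WB_def WE_def B_def)
  also have "\<dots> \<le> A * (C * measure M Q) powr p * WE"
    using BQ p \<open>0 < measure M B\<close> Ap_const_nonneg[OF w]
    by (intro mult_right_mono mult_left_mono powr_mono2) (auto simp: WE_def A_def B_def)
  also have "\<dots> = C powr p * A * WE * measure M Q powr p"
    using \<open>0 < C\<close> \<open>0 < measure M Q\<close> by (simp add: powr_mult mult_ac)
  finally have "WQ * \<eta> powr p \<le> C powr p * A * WE"
    using \<open>0 < measure M Q\<close> by (simp add: mult_le_cancel_right)
  then have "ennreal WQ \<le> ennreal (C powr p * (1 / \<eta> powr p) * A * WE)"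
    using \<eta> by (intro ennreal_leI) (simp add: pos_le_divide_eq mult_ac)
  also have "\<dots> = ennreal (C powr p * (1 / \<eta> powr p) * A) * ennreal WE"
    using Ap_const_nonneg[OF w] by (intro ennreal_mult) (auto simp: A_def WE_def)
  finally show ?thesis
    using fin by (simp add: WQ_def WE_def A_def)
qed

lemma infsum_le_wmeas_Union_disjoint_parts:
  fixes S :: "'a set set" and E :: "'a set \<Rightarrow> 'a set" and f :: "'a set \<Rightarrow> ennreal"
  assumes w: "w \<in> borel_measurable M" and disj: "disjoint_family_on E S"
    and E: "\<And>Q. Q \<in> S \<Longrightarrow> E Q \<in> sets M \<and> E Q \<subseteq> Q"
    and f: "\<And>Q. Q \<in> S \<Longrightarrow> f Q \<le> K * wmeas M w (E Q)"
  shows "(\<Sum>\<^sub>\<infinity>Q\<in>S. f Q) \<le> K * wmeas M w (\<Union>S)"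
proof (rule infsum_le_finite_sums)
  show "f summable_on S" by (rule nonneg_summable_on_complete) simp
next
  fix F assume F: "finite F" "F \<subseteq> S"
  define W where "W = density M (\<lambda>x. ennreal (w x))"
  have "(\<Sum>Q\<in>F. f Q) \<le> K * (\<Sum>Q\<in>F. emeasure W (E Q))"
    using f E F w by (auto simp: sum_distrib_left W_def wmeas_eq_emeasure_density intro!: sum_mono)
  also have "(\<Sum>Q\<in>F. emeasure W (E Q)) = emeasure W (\<Union>Q\<in>F. E Q)"
    using E F disj by (intro sum_emeasure) (auto simp: W_def intro: disjoint_family_on_mono)
  also have "\<dots> = wmeas M w (\<Union>Q\<in>F. E Q)"
    using E F w by (subst wmeas_eq_emeasure_density) (auto simp: W_def)
  also have "\<dots> \<le> wmeas M w (\<Union>S)"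
    using E F by (intro wmeas_mono) auto
  finally show "(\<Sum>Q\<in>F. f Q) \<le> K * wmeas M w (\<Union>S)"
    by (simp add: mult_left_mono)
qed

theorem lemma2p4:
  fixes M :: "'a measure" and d :: "'a \<Rightarrow> 'a \<Rightarrow> real"
    and D :: "int \<Rightarrow> 'a set set" and c0 C0 \<delta> p :: real
  assumes "homogeneous_space M d"
    and "dyadic_system M d c0 C0 \<delta> D"
    and "1 < p"
  shows "\<exists>c>0. \<forall>(w :: 'a \<Rightarrow> real) (\<eta> :: real) S.
           in_Ap M d p w \<longrightarrow> 0 < \<eta> \<longrightarrow> \<eta> < 1 \<longrightarrow>
           S \<subseteq> dyadic_cubes D \<longrightarrow> sparse M \<eta> S \<longrightarrow>
           (\<Sum>\<^sub>\<infinity>Q\<in>S. wmeas M w Q)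
             \<le> ennreal (c * (1 / \<eta> powr p) * Ap_const M d p w) * wmeas M w (\<Union>S)"
proof -
  obtain C where "C > 0" and ball: "\<And>Q. Q \<in> dyadic_cubes D \<Longrightarrow>
      \<exists>z r. r > 0 \<and> Q \<subseteq> qball d z r \<and> measure M (qball d z r) \<le> C * measure M Q"
    using dyadic_cube_ball_comparable[OF assms(1,2)] by blast
  have "(\<Sum>\<^sub>\<infinity>Q\<in>S. wmeas M w Q)
          \<le> ennreal (C powr p * (1 / \<eta> powr p) * Ap_const M d p w) * wmeas M w (\<Union>S)"
    if w: "in_Ap M d p w" and "0 < \<eta>" and S: "S \<subseteq> dyadic_cubes D" and "sparse M \<eta> S"
    for w :: "'a \<Rightarrow> real" and \<eta> S
  proof -
    obtain E where "disjoint_family_on E S" and E: "\<And>Q. Q \<in> S \<Longrightarrow>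
        E Q \<subseteq> Q \<and> E Q \<in> sets M \<and> ennreal \<eta> * emeasure M Q \<le> emeasure M (E Q)"
      using \<open>sparse M \<eta> S\<close> unfolding sparse_def by blast
    have "wmeas M w Q \<le> ennreal (C powr p * (1 / \<eta> powr p) * Ap_const M d p w) * wmeas M w (E Q)"
      if "Q \<in> S" for Q
      using ball[of Q] S \<open>Q \<in> S\<close> E[OF \<open>Q \<in> S\<close>] \<open>0 < \<eta>\<close>
        wmeas_le_Ap_const_wmeas_large_subset[OF assms(1) w assms(3)] by blast
    then show ?thesis
      using w \<open>disjoint_family_on E S\<close> E
      by (intro infsum_le_wmeas_Union_disjoint_parts) (auto simp: in_Ap_def)
  qed
  moreover have "C powr p > 0" using \<open>C > 0\<close> by simp
  ultimately show ?thesis by blast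
qed

end
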